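(* Let $M=\mathbb{R}/\mathbb{Z}$ with metric $d_M(x,y)=\inf|\tilde x-\tilde y|$ over representatives, $\pi_M:\mathbb{R}\to M$ the projection and $I_0=\pi_M([\tfrac14,\tfrac34])$. Let $f_0:M\to M$ be a $\mathscr{C}^r$ diffeomorphism ($r\ge1$) with $f_0(x)=\tfrac12x+\tfrac14\bmod1$ on $I_0$. Let $\Omega$ be a set, $\theta:\Omega\to\Omega$ a map, $\kappa:\Omega\to[-1,1]$ a function, $0<\epsilon<\tfrac18$, $f_\omega(x)=f_0(x)+\epsilon\kappa(\omega)\bmod1$, and $f^{(n)}_\omega=f_{\theta^{n-1}\omega}\circ\cdots\circ f_\omega$ ($f^{(0)}_\omega=\mathrm{id}_M$). For $\omega\in\Omega$ let $X_\omega$ be the unique fixed point of $f_\omega|_{I_0}:I_0\to I_0$ (namely $X_\omega=\pi_M(\tfrac12+2\epsilon\kappa(\omega))$). Then for all $n\in\mathbb{N}_0$, $x\in I_0$ and $\omega,\omega'\in\Omega$, $$d_M\bigl(f^{(n)}_\omega(x),X_{\omega'}\bigr)\le\frac1{2^n}+6\epsilon\max_{0\le j\le n-1}\bigl|\kappa(\theta^j\omega)-\kappa(\omega')\bigr|.$$ *)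

theory Defs
  imports "HOL-Analysis.Analysis"
begin

text \<open>The circle M = R/Z. Points of M are represented by their unique
representative in [0,1); the projection pi_M is frac.\<close>

definition circle_proj :: "real \<Rightarrow> real" where
  "circle_proj x = frac x"

definition circle_dist :: "real \<Rightarrow> real \<Rightarrow> real" where
  "circle_dist x y = (INF k::int. \<bar>x - y - of_int k\<bar>)"

definition I0 :: "real set" where
  "I0 = circle_proj ` {1/4..3/4}"

fun Cr :: "nat \<Rightarrow> (real \<Rightarrow> real) \<Rightarrow> bool" where
  "Cr 0 F = continuous_on UNIV F"
| "Cr (Suc k) F = ((\<forall>x. F differentiable (at x)) \<and> Cr k (deriv F))"

text \<open>A map f : M -> M (given on representatives in [0,1)) is a C^r
diffeomorphism iff it has a C^r lift F : R -> R of degree +-1 with nowhere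
vanishing derivative.\<close>
definition circle_Cr_diffeo :: "nat \<Rightarrow> (real \<Rightarrow> real) \<Rightarrow> bool" where
  "circle_Cr_diffeo r f \<longleftrightarrow>
     (\<exists>F. Cr r F \<and>
          ((\<forall>x. F (x + 1) = F x + 1) \<or> (\<forall>x. F (x + 1) = F x - 1)) \<and>
          (\<forall>x. deriv F x \<noteq> 0) \<and>
          (\<forall>x\<in>{0..<1}. f x = circle_proj (F x)))"

definition fom :: "(real \<Rightarrow> real) \<Rightarrow> real \<Rightarrow> ('a \<Rightarrow> real) \<Rightarrow> 'a \<Rightarrow> real \<Rightarrow> real" where
  "fom f0 eps kappa \<omega> x = circle_proj (f0 x + eps * kappa \<omega>)"

fun fiter :: "('a \<Rightarrow> real \<Rightarrow> real) \<Rightarrow> ('a \<Rightarrow> 'a) \<Rightarrow> nat \<Rightarrow> 'a \<Rightarrow> real \<Rightarrow> real" where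
  "fiter f \<theta> 0 \<omega> = id"
| "fiter f \<theta> (Suc n) \<omega> = fiter f \<theta> n (\<theta> \<omega>) \<circ> f \<omega>"

definition Xfix :: "(real \<Rightarrow> real) \<Rightarrow> real \<Rightarrow> ('a \<Rightarrow> real) \<Rightarrow> 'a \<Rightarrow> real" where
  "Xfix f0 eps kappa \<omega> = (THE x. x \<in> I0 \<and> fom f0 eps kappa \<omega> x = x)"

end

theory Submission
  imports Defs
begin

text \<open>On I0 every fibre map is the affine contraction y \<mapsto> y/2 + 1/4 + \<epsilon> \<kappa>(\<omega>), whose fixed
point is 1/2 + 2\<epsilon>\<kappa>(\<omega>). Comparing with the fixed point for \<omega>' gives
f_\<omega>(y) - X_\<omega>' = (y - X_\<omega>')/2 + \<epsilon>(\<kappa>(\<omega>) - \<kappa>(\<omega>')), so the distance to X_\<omega>' is halved in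
each step up to an error \<epsilon>|\<kappa>(\<theta>^j \<omega>) - \<kappa>(\<omega>')|; summing the geometric series of errors gives the
factor 2\<epsilon>, so the stated constant 6\<epsilon> is far from tight.\<close>

lemma I0_eq: "I0 = {1/4..3/4}"
proof -
  have "circle_proj ` {1/4..3/4} = (\<lambda>x. x) ` {1/4..(3/4::real)}"
    by (rule image_cong) (auto simp: circle_proj_def frac_eq)
  then show ?thesis by (simp add: I0_def)
qed

lemma circle_dist_le_abs: "circle_dist a b \<le> \<bar>a - b\<bar>"
proof -
  have "(INF k::int. \<bar>a - b - of_int k\<bar>) \<le> \<bar>a - b - of_int 0\<bar>"
    by (rule cINF_lower) (auto intro: bdd_belowI[where m=0])
  then show ?thesis by (simp add: circle_dist_def)
qed

lemma fiter_Suc_left: "fiter f \<theta> (Suc n) \<omega> = f ((\<theta>^^n) \<omega>) \<circ> fiter f \<theta> n \<omega>"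
proof (induction n arbitrary: \<omega>)
  case 0
  then show ?case by simp
next
  case (Suc n)
  have "fiter f \<theta> (Suc (Suc n)) \<omega> = fiter f \<theta> (Suc n) (\<theta> \<omega>) \<circ> f \<omega>"
    by simp
  also have "\<dots> = f ((\<theta>^^n) (\<theta> \<omega>)) \<circ> fiter f \<theta> n (\<theta> \<omega>) \<circ> f \<omega>"
    by (simp only: Suc.IH)
  finally show ?case by (simp add: funpow_swap1 o_assoc)
qed

lemma halving_recurrence_bound:
  fixes a b :: "nat \<Rightarrow> real"
  assumes "0 \<le> c" and step: "\<And>m. a (Suc m) \<le> a m / 2 + c * b m"
  shows "a n \<le> a 0 / 2 ^ n + 2 * c * Max (insert 0 (b ` {..<n}))"
proof (induction n)
  case 0
  then show ?case by simp
next
  case (Suc n)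
  let ?M = "\<lambda>n. Max (insert 0 (b ` {..<n}))"
  have "?M n \<le> ?M (Suc n)"
    by (rule Max_mono) auto
  moreover have "b n \<le> ?M (Suc n)"
    by (rule Max_ge) auto
  ultimately have "c * ?M n \<le> c * ?M (Suc n)" and "c * b n \<le> c * ?M (Suc n)"
    using \<open>0 \<le> c\<close> by (simp_all add: mult_left_mono)
  have "a (Suc n) \<le> (a 0 / 2 ^ n + 2 * c * ?M n) / 2 + c * b n"
    using step[of n] divide_right_mono[OF Suc.IH, of 2] by linarith
  also have "\<dots> = a 0 / 2 ^ Suc n + c * ?M n + c * b n"
    by simp
  also have "\<dots> \<le> a 0 / 2 ^ Suc n + 2 * c * ?M (Suc n)"
    using \<open>c * ?M n \<le> c * ?M (Suc n)\<close> \<open>c * b n \<le> c * ?M (Suc n)\<close> by linarith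
  finally show ?case .
qed

locale affine_on_I0 =
  fixes f0 :: "real \<Rightarrow> real" and \<epsilon> :: real and \<kappa> :: "'a \<Rightarrow> real"
  assumes f0_on_I0: "\<forall>x\<in>I0. f0 x = circle_proj (x / 2 + 1 / 4)"
    and \<kappa>_bounded: "\<forall>\<omega>. \<kappa> \<omega> \<in> {-1..1}"
    and \<epsilon>_nonneg: "0 \<le> \<epsilon>" and \<epsilon>_le: "\<epsilon> \<le> 1 / 8"
begin

abbreviation f :: "'a \<Rightarrow> real \<Rightarrow> real" where
  "f \<equiv> fom f0 \<epsilon> \<kappa>"

lemma \<epsilon>\<kappa>_bounds: "- \<epsilon> \<le> \<epsilon> * \<kappa> \<omega>" "\<epsilon> * \<kappa> \<omega> \<le> \<epsilon>"
  using \<kappa>_bounded \<epsilon>_nonneg mult_left_mono[of "\<kappa> \<omega>" 1 \<epsilon>] mult_left_mono[of "-1" "\<kappa> \<omega>" \<epsilon>]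
  by auto

lemma f_on_I0:
  assumes "y \<in> I0"
  shows "f \<omega> y = y / 2 + 1 / 4 + \<epsilon> * \<kappa> \<omega>" and "f \<omega> y \<in> I0"
proof -
  have y: "1/4 \<le> y" "y \<le> 3/4" using assms by (auto simp: I0_eq)
  then have "f0 y = y / 2 + 1 / 4"
    using f0_on_I0 assms by (simp add: circle_proj_def frac_eq)
  moreover have "1/4 \<le> y / 2 + 1 / 4 + \<epsilon> * \<kappa> \<omega>" "y / 2 + 1 / 4 + \<epsilon> * \<kappa> \<omega> \<le> 3/4"
    using y \<epsilon>\<kappa>_bounds[of \<omega>] \<epsilon>_le by linarith+
  ultimately show "f \<omega> y = y / 2 + 1 / 4 + \<epsilon> * \<kappa> \<omega>" and "f \<omega> y \<in> I0"
    by (simp_all add: fom_def circle_proj_def frac_eq I0_eq)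
qed

lemma fixed_point_in_I0: "1 / 2 + 2 * \<epsilon> * \<kappa> \<omega> \<in> I0"
  using \<epsilon>\<kappa>_bounds[of \<omega>] \<epsilon>_le by (simp add: I0_eq)

lemma Xfix_eq: "Xfix f0 \<epsilon> \<kappa> \<omega> = 1 / 2 + 2 * \<epsilon> * \<kappa> \<omega>"
  unfolding Xfix_def
proof (rule the_equality)
  show "1 / 2 + 2 * \<epsilon> * \<kappa> \<omega> \<in> I0 \<and> f \<omega> (1 / 2 + 2 * \<epsilon> * \<kappa> \<omega>) = 1 / 2 + 2 * \<epsilon> * \<kappa> \<omega>"
    using fixed_point_in_I0 f_on_I0[OF fixed_point_in_I0[of \<omega>], of \<omega>] by (simp add: field_simps)
next
  fix y assume "y \<in> I0 \<and> f \<omega> y = y"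
  then show "y = 1 / 2 + 2 * \<epsilon> * \<kappa> \<omega>"
    using f_on_I0[of y \<omega>] by (simp add: field_simps)
qed

lemma f_dist_Xfix:
  assumes "y \<in> I0"
  shows "\<bar>f \<omega> y - Xfix f0 \<epsilon> \<kappa> \<omega>'\<bar> \<le> \<bar>y - Xfix f0 \<epsilon> \<kappa> \<omega>'\<bar> / 2 + \<epsilon> * \<bar>\<kappa> \<omega> - \<kappa> \<omega>'\<bar>"
proof -
  have "f \<omega> y - Xfix f0 \<epsilon> \<kappa> \<omega>' = (y - Xfix f0 \<epsilon> \<kappa> \<omega>') / 2 + \<epsilon> * (\<kappa> \<omega> - \<kappa> \<omega>')"
    using f_on_I0(1)[OF assms] by (simp add: Xfix_eq field_simps)
  then show ?thesis
    using abs_triangle_ineq[of "(y - Xfix f0 \<epsilon> \<kappa> \<omega>') / 2" "\<epsilon> * (\<kappa> \<omega> - \<kappa> \<omega>')"] \<epsilon>_nonneg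
    by (simp add: abs_mult)
qed

lemma fiter_in_I0: "x \<in> I0 \<Longrightarrow> fiter f \<theta> n \<omega> x \<in> I0"
  by (induction n arbitrary: \<omega> x) (simp_all add: f_on_I0(2))

lemma fiter_dist_Xfix:
  assumes "x \<in> I0"
  shows "\<bar>fiter f \<theta> n \<omega> x - Xfix f0 \<epsilon> \<kappa> \<omega>'\<bar>
    \<le> 1 / 2 ^ n + 2 * \<epsilon> * Max (insert 0 ((\<lambda>j. \<bar>\<kappa> ((\<theta> ^^ j) \<omega>) - \<kappa> \<omega>'\<bar>) ` {..<n}))"
proof -
  let ?a = "\<lambda>m. \<bar>fiter f \<theta> m \<omega> x - Xfix f0 \<epsilon> \<kappa> \<omega>'\<bar>"
  have "?a n \<le> ?a 0 / 2 ^ n + 2 * \<epsilon> * Max (insert 0 ((\<lambda>j. \<bar>\<kappa> ((\<theta> ^^ j) \<omega>) - \<kappa> \<omega>'\<bar>) ` {..<n}))"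
    using \<epsilon>_nonneg
    by (rule halving_recurrence_bound)
      (unfold fiter_Suc_left o_apply, rule f_dist_Xfix[OF fiter_in_I0[OF assms]])
  moreover have "?a 0 \<le> 1"
    using assms fixed_point_in_I0[of \<omega>'] by (auto simp: I0_eq Xfix_eq)
  then have "?a 0 / 2 ^ n \<le> 1 / 2 ^ n"
    by (simp add: divide_right_mono)
  ultimately show ?thesis
    by linarith
qed

end

theorem lemma2p1:
  fixes r :: nat and f0 :: "real \<Rightarrow> real" and \<theta> :: "'a \<Rightarrow> 'a"
    and \<kappa> :: "'a \<Rightarrow> real" and \<epsilon> :: real
  assumes "r \<ge> 1"
    and "circle_Cr_diffeo r f0"
    and "\<forall>x\<in>I0. f0 x = circle_proj (x / 2 + 1 / 4)"
    and "\<forall>\<omega>. \<kappa> \<omega> \<in> {-1..1}"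
    and "0 < \<epsilon>" and "\<epsilon> < 1 / 8"
  shows "\<forall>n::nat. \<forall>x\<in>I0. \<forall>\<omega> \<omega>'.
    circle_dist (fiter (fom f0 \<epsilon> \<kappa>) \<theta> n \<omega> x) (Xfix f0 \<epsilon> \<kappa> \<omega>')
      \<le> 1 / 2 ^ n + 6 * \<epsilon> * Max (insert 0 {\<bar>\<kappa> ((\<theta> ^^ j) \<omega>) - \<kappa> \<omega>'\<bar> | j. j < n})"
proof (intro allI ballI)
  fix n :: nat and x \<omega> \<omega>'
  assume "x \<in> I0"
  interpret affine_on_I0 f0 \<epsilon> \<kappa>
    using assms(3-6) by unfold_locales auto
  let ?D = "Max (insert 0 {\<bar>\<kappa> ((\<theta> ^^ j) \<omega>) - \<kappa> \<omega>'\<bar> | j. j < n})"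
  have "{\<bar>\<kappa> ((\<theta> ^^ j) \<omega>) - \<kappa> \<omega>'\<bar> | j. j < n} = (\<lambda>j. \<bar>\<kappa> ((\<theta> ^^ j) \<omega>) - \<kappa> \<omega>'\<bar>) ` {..<n}"
    by auto
  then have "\<bar>fiter f \<theta> n \<omega> x - Xfix f0 \<epsilon> \<kappa> \<omega>'\<bar> \<le> 1 / 2 ^ n + 2 * \<epsilon> * ?D"
    using fiter_dist_Xfix[OF \<open>x \<in> I0\<close>] by simp
  moreover have "0 \<le> ?D"
    by (rule Max_ge) auto
  then have "2 * \<epsilon> * ?D \<le> 6 * \<epsilon> * ?D"
    using assms(5) by (simp add: mult_right_mono)
  ultimately show "circle_dist (fiter f \<theta> n \<omega> x) (Xfix f0 \<epsilon> \<kappa> \<omega>') \<le> 1 / 2 ^ n + 6 * \<epsilon> * ?D"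
    using circle_dist_le_abs order_trans by fastforce
qed

end
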